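(* For any POVM $\{\mathcal{M}_i\}_{i\in\mathcal{O}}$ on $\mathcal{H}$, \[K^*(\{\mathcal{M}_i\}_{i\in\mathcal{O}})=\max_{A\subseteq\mathcal{O}}\big[\lambda_{\max}(\mathcal{M}_A)-\lambda_{\min}(\mathcal{M}_A)\big],\qquad \mathcal{M}_A=\sum_{i\in A}\mathcal{M}_i,\] where $\lambda_{\max},\lambda_{\min}$ are the largest and smallest eigenvalues (with $\mathcal{M}_\emptyset=0$). Moreover, if $A^*$ attains the maximum and $|\psi\rangle,|\phi\rangle$ are mutually orthogonal normalized eigenvectors of $\mathcal{M}_{A^*}$ for its largest and smallest eigenvalues respectively, then with $\psi=|\psi\rangle\langle\psi|$, $\phi=|\phi\rangle\langle\phi|$, \[2K^*(\{\mathcal{M}_i\}_{i\in\mathcal{O}})=\sum_{i\in\mathcal{O}}|\mathrm{tr}(\mathcal{M}_i(\psi-\phi))|.\]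
   Context: $\mathcal{H}$ is a finite-dimensional Hilbert space of dimension at least 2, $\mathcal{D}(\mathcal{H})$ its density matrices. A POVM is a finite family $\{\mathcal{M}_i\}_{i\in\mathcal{O}}$ of positive semidefinite matrices with $\sum_i\mathcal{M}_i=I$, and $K^*(\{\mathcal{M}_i\}_{i\in\mathcal{O}})=\max_{\rho,\sigma\in\mathcal{D}(\mathcal{H})}\frac12\sum_{i\in\mathcal{O}}|\mathrm{tr}(\mathcal{M}_i(\rho-\sigma))|$. *)

theory Defs
  imports "Jordan_Normal_Form.Schur_Decomposition"
begin

(* Hilbert space H = C^n; operators are complex n x n matrices (Jordan_Normal_Form). *)

definition mtrace :: "complex mat \<Rightarrow> complex" where
  "mtrace A = (\<Sum>i<dim_row A. A $$ (i, i))"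

definition hermitian :: "complex mat \<Rightarrow> bool" where
  "hermitian A \<longleftrightarrow> mat_adjoint A = A"

definition psd :: "nat \<Rightarrow> complex mat \<Rightarrow> bool" where
  "psd n A \<longleftrightarrow> A \<in> carrier_mat n n \<and> hermitian A \<and>
     (\<forall>v \<in> carrier_vec n. 0 \<le> Re ((A *\<^sub>v v) \<bullet>c v))"

definition density :: "nat \<Rightarrow> complex mat \<Rightarrow> bool" where
  "density n \<rho> \<longleftrightarrow> psd n \<rho> \<and> mtrace \<rho> = 1"

definition msum :: "nat \<Rightarrow> ('i \<Rightarrow> complex mat) \<Rightarrow> 'i set \<Rightarrow> complex mat" where
  "msum n M A = mat n n (\<lambda>(r, c). \<Sum>i\<in>A. M i $$ (r, c))"

definition povm :: "nat \<Rightarrow> 'i set \<Rightarrow> ('i \<Rightarrow> complex mat) \<Rightarrow> bool" where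
  "povm n Out M \<longleftrightarrow> finite Out \<and> (\<forall>i\<in>Out. psd n (M i)) \<and> msum n M Out = 1\<^sub>m n"

definition Kstar :: "nat \<Rightarrow> 'i set \<Rightarrow> ('i \<Rightarrow> complex mat) \<Rightarrow> real" where
  "Kstar n Out M = Sup {(1/2) * (\<Sum>i\<in>Out. cmod (mtrace (M i * (\<rho> - \<sigma>)))) | \<rho> \<sigma>.
      density n \<rho> \<and> density n \<sigma>}"

definition lambda_max :: "complex mat \<Rightarrow> real" where
  "lambda_max A = Max {x. eigenvalue A (complex_of_real x)}"

definition lambda_min :: "complex mat \<Rightarrow> real" where
  "lambda_min A = Min {x. eigenvalue A (complex_of_real x)}"

definition proj :: "complex vec \<Rightarrow> complex mat" where
  "proj v = mat (dim_vec v) (dim_vec v) (\<lambda>(r, c). v $ r * cnj (v $ c))"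

end

theory Submission
  imports Defs "Jordan_Normal_Form.Spectral_Radius"
begin

text \<open>For states \<open>\<rho>\<close>, \<open>\<sigma>\<close> the numbers \<open>a_i = tr (M_i (\<rho> - \<sigma>))\<close> are real and sum
  to zero. Hence \<open>\<Sum>_i |a_i|\<close> equals \<open>2 (tr (M_A \<rho>) - tr (M_A \<sigma>))\<close> for the set \<open>A\<close> of
  outcomes with \<open>a_i \<ge> 0\<close>, and is at least \<open>2 (tr (M_B \<rho>) - tr (M_B \<sigma>))\<close> for every \<open>B\<close>.
  By the spectral theorem the expectation \<open>tr (X \<rho>)\<close> of a Hermitian \<open>X\<close> in a state is a
  convex combination of eigenvalues of \<open>X\<close>, so it lies between \<open>\<lambda>_min X\<close> and \<open>\<lambda>_max X\<close>.
  Therefore \<open>K\<^sup>*\<close> is at most the largest gap \<open>\<lambda>_max M_A - \<lambda>_min M_A\<close>, and the pure states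
  on extreme eigenvectors of an optimal \<open>M_A\<close> attain it.\<close>

lemma mat_adjoint_eq_mat:
  fixes A :: "complex mat"
  shows "mat_adjoint A = mat (dim_col A) (dim_row A) (\<lambda>(i, j). cnj (A $$ (j, i)))"
  by (rule eq_matI) (auto simp: mat_adjoint_def mat_of_rows_def)

lemma dim_mat_adjoint [simp]:
  fixes A :: "complex mat"
  shows "dim_row (mat_adjoint A) = dim_col A" "dim_col (mat_adjoint A) = dim_row A"
  by (auto simp: mat_adjoint_eq_mat)

lemma index_mat_adjoint [simp]:
  fixes A :: "complex mat"
  shows "i < dim_col A \<Longrightarrow> j < dim_row A \<Longrightarrow> mat_adjoint A $$ (i, j) = cnj (A $$ (j, i))"
  by (auto simp: mat_adjoint_eq_mat)

lemma mat_adjoint_carrier [simp]: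
  fixes A :: "complex mat"
  shows "A \<in> carrier_mat n m \<Longrightarrow> mat_adjoint A \<in> carrier_mat m n"
  by (metis dim_mat_adjoint carrier_matD carrier_matI)

lemma mat_adjoint_adjoint [simp]:
  fixes A :: "complex mat"
  shows "mat_adjoint (mat_adjoint A) = A"
  by (rule eq_matI) auto

lemma mat_adjoint_one [simp]: "mat_adjoint (1\<^sub>m n :: complex mat) = 1\<^sub>m n"
  by (rule eq_matI) auto

lemma mat_adjoint_minus:
  fixes A B :: "complex mat"
  assumes "A \<in> carrier_mat n m" "B \<in> carrier_mat n m"
  shows "mat_adjoint (A - B) = mat_adjoint A - mat_adjoint B"
  using assms by (intro eq_matI) (simp_all add: carrier_matD)

lemma mat_adjoint_mult:
  fixes A B :: "complex mat"
  assumes "dim_col A = dim_row B"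
  shows "mat_adjoint (A * B) = mat_adjoint B * mat_adjoint A"
proof (rule eq_matI)
  fix i j assume "i < dim_row (mat_adjoint B * mat_adjoint A)"
    and "j < dim_col (mat_adjoint B * mat_adjoint A)"
  then have i: "i < dim_col B" and j: "j < dim_row A" by auto
  have "mat_adjoint (A * B) $$ (i, j) = cnj (\<Sum>k<dim_row B. A $$ (j, k) * B $$ (k, i))"
    using i j assms by (simp add: scalar_prod_def atLeast0LessThan)
  also have "\<dots> = (\<Sum>k<dim_row B. cnj (B $$ (k, i)) * cnj (A $$ (j, k)))"
    by (simp add: mult.commute)
  also have "\<dots> = (mat_adjoint B * mat_adjoint A) $$ (i, j)"
    using i j assms by (simp add: scalar_prod_def atLeast0LessThan)
  finally show "mat_adjoint (A * B) $$ (i, j) = (mat_adjoint B * mat_adjoint A) $$ (i, j)" .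
qed auto

lemma index_mat_adjoint_mult:
  fixes A B :: "complex mat"
  assumes "i < dim_col A" "j < dim_col B" "dim_row A = dim_row B"
  shows "(mat_adjoint A * B) $$ (i, j) = col B j \<bullet>c col A i"
  using assms by (simp add: scalar_prod_def mult.commute)

lemma mtrace_mult_comm:
  fixes A B :: "complex mat"
  assumes "A \<in> carrier_mat n m" "B \<in> carrier_mat m n"
  shows "mtrace (A * B) = mtrace (B * A)"
proof -
  have "mtrace (A * B) = (\<Sum>i<n. \<Sum>k<m. A $$ (i, k) * B $$ (k, i))"
    using assms by (simp add: mtrace_def scalar_prod_def atLeast0LessThan)
  also have "\<dots> = (\<Sum>k<m. \<Sum>i<n. B $$ (k, i) * A $$ (i, k))"
    by (subst sum.swap) (simp add: mult.commute)
  also have "\<dots> = mtrace (B * A)"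
    using assms by (simp add: mtrace_def scalar_prod_def atLeast0LessThan)
  finally show ?thesis .
qed

lemma mtrace_minus:
  fixes A B :: "complex mat"
  assumes "A \<in> carrier_mat n n" "B \<in> carrier_mat n n"
  shows "mtrace (A - B) = mtrace A - mtrace B"
  using assms unfolding mtrace_def by (simp add: carrier_matD sum_subtractf)

lemma mtrace_mult_minus:
  fixes X R S :: "complex mat"
  assumes "X \<in> carrier_mat n n" "R \<in> carrier_mat n n" "S \<in> carrier_mat n n"
  shows "mtrace (X * (R - S)) = mtrace (X * R) - mtrace (X * S)"
  using assms by (simp add: mult_minus_distrib_mat[OF assms] mtrace_minus[of _ n])

lemma mtrace_adjoint:
  fixes A :: "complex mat"
  assumes "A \<in> carrier_mat n n"
  shows "mtrace (mat_adjoint A) = cnj (mtrace A)"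
  using assms unfolding mtrace_def by (simp add: carrier_matD)

lemma mtrace_mult_hermitian_real:
  fixes A B :: "complex mat"
  assumes A: "A \<in> carrier_mat n n" "hermitian A" and B: "B \<in> carrier_mat n n" "hermitian B"
  shows "mtrace (A * B) = of_real (Re (mtrace (A * B)))"
proof -
  have "cnj (mtrace (A * B)) = mtrace (mat_adjoint (A * B))"
    using A B by (simp add: mtrace_adjoint[of _ n])
  also have "\<dots> = mtrace (B * A)"
    using A B by (simp add: mat_adjoint_mult carrier_matD hermitian_def)
  also have "\<dots> = mtrace (A * B)"
    using A B by (simp add: mtrace_mult_comm[of _ n n])
  finally show ?thesis by (simp add: complex_eq_iff)
qed

lemma cscalar_eq_sum: "(v :: complex vec) \<bullet>c w = (\<Sum>i<dim_vec w. v $ i * cnj (w $ i))"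
  unfolding scalar_prod_def by (simp add: atLeast0LessThan)

lemma cscalar_smult:
  assumes "dim_vec v = dim_vec (w :: complex vec)"
  shows "(a \<cdot>\<^sub>v v) \<bullet>c (b \<cdot>\<^sub>v w) = a * cnj b * (v \<bullet>c w)"
  using assms unfolding cscalar_eq_sum sum_distrib_left by (intro sum.cong) (simp_all add: ac_simps)

lemma cscalar_smult_left:
  assumes "dim_vec v = dim_vec (w :: complex vec)"
  shows "(a \<cdot>\<^sub>v v) \<bullet>c w = a * (v \<bullet>c w)"
  using assms unfolding cscalar_eq_sum sum_distrib_left by (intro sum.cong) (simp_all add: ac_simps)

lemma cscalar_commute:
  assumes "dim_vec v = dim_vec (w :: complex vec)"
  shows "w \<bullet>c v = cnj (v \<bullet>c w)"
  using assms unfolding cscalar_eq_sum by (simp add: mult.commute)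

definition normalize_vec :: "complex vec \<Rightarrow> complex vec" where
  "normalize_vec v = of_real (1 / sqrt (Re (v \<bullet>c v))) \<cdot>\<^sub>v v"

lemma normalize_vec_carrier [simp]: "v \<in> carrier_vec n \<Longrightarrow> normalize_vec v \<in> carrier_vec n"
  by (simp add: normalize_vec_def)

lemma cscalar_normalize_vec_self:
  assumes "v \<in> carrier_vec n" "v \<noteq> 0\<^sub>v n"
  shows "normalize_vec v \<bullet>c normalize_vec v = 1"
proof -
  define r where "r = Re (v \<bullet>c v)"
  have "v \<bullet>c v > 0" using assms by simp
  then have vv: "v \<bullet>c v = of_real r" and r: "r > 0"
    unfolding r_def by (auto simp: less_complex_def complex_eq_iff)
  have "normalize_vec v \<bullet>c normalize_vec v
      = of_real (1 / sqrt r) * cnj (of_real (1 / sqrt r)) * of_real r"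
    unfolding normalize_vec_def r_def[symmetric] by (subst cscalar_smult) (simp_all add: vv)
  also have "\<dots> = of_real (1 / sqrt r * (1 / sqrt r) * r)"
    by (simp only: complex_cnj_complex_of_real of_real_mult)
  also have "1 / sqrt r * (1 / sqrt r) * r = 1"
    using r by (simp add: field_simps)
  finally show ?thesis by simp
qed

lemma cscalar_normalize_vec_orthogonal:
  assumes "dim_vec v = dim_vec w" "v \<bullet>c w = 0"
  shows "normalize_vec v \<bullet>c normalize_vec w = 0"
  unfolding normalize_vec_def using assms by (subst cscalar_smult) simp_all

lemma cscalar_normalize_corthogonal:
  assumes orth: "corthogonal ws" and ws: "set ws \<subseteq> carrier_vec n"
    and i: "i < length ws" and j: "j < length ws"
  shows "normalize_vec (ws ! j) \<bullet>c normalize_vec (ws ! i) = (if i = j then 1 else 0)"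
proof -
  have c: "ws ! i \<in> carrier_vec n" "ws ! j \<in> carrier_vec n" using ws i j by auto
  show ?thesis
  proof (cases "i = j")
    case True
    have "ws ! i \<noteq> 0\<^sub>v n" using corthogonalD[OF orth i i] c by auto
    then show ?thesis using True c by (simp add: cscalar_normalize_vec_self)
  next
    case False
    then have "ws ! j \<bullet>c ws ! i = 0" using corthogonalD[OF orth j i] by simp
    then show ?thesis using False c by (simp add: cscalar_normalize_vec_orthogonal carrier_vecD)
  qed
qed

lemma unit_eigenvector_exists:
  fixes A :: "complex mat"
  assumes A: "A \<in> carrier_mat n n" and "eigenvalue A l"
  obtains v where "v \<in> carrier_vec n" "v \<bullet>c v = 1" "eigenvector A v l"
proof -
  obtain v where "eigenvector A v l" using assms(2) unfolding eigenvalue_def by blast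
  then have v: "v \<in> carrier_vec n" "v \<noteq> 0\<^sub>v n" and Av: "A *\<^sub>v v = l \<cdot>\<^sub>v v"
    using A unfolding eigenvector_def by auto
  have unit: "normalize_vec v \<bullet>c normalize_vec v = 1"
    by (rule cscalar_normalize_vec_self[OF v])
  then have "normalize_vec v \<noteq> 0\<^sub>v n"
    using v by auto
  moreover have "A *\<^sub>v normalize_vec v = l \<cdot>\<^sub>v normalize_vec v"
    unfolding normalize_vec_def using A v Av
    by (simp add: mult_mat_vec smult_smult_assoc mult.commute)
  ultimately have "eigenvector A (normalize_vec v) l"
    using A v unfolding eigenvector_def by simp
  then show thesis using v unit by (intro that) simp_all
qed

definition unitary_mat :: "nat \<Rightarrow> complex mat \<Rightarrow> bool" where
  "unitary_mat n U \<longleftrightarrow> U \<in> carrier_mat n n \<and> mat_adjoint U * U = 1\<^sub>m n"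

lemma unitary_matD:
  assumes "unitary_mat n U"
  shows "U \<in> carrier_mat n n" "mat_adjoint U * U = 1\<^sub>m n"
  using assms unfolding unitary_mat_def by auto

lemma unitary_mat_right_inverse:
  assumes "unitary_mat n U"
  shows "U * mat_adjoint U = 1\<^sub>m n"
  using mat_mult_left_right_inverse[of "mat_adjoint U" n U] unitary_matD[OF assms] by simp

lemma unitary_mat_mult:
  assumes U: "unitary_mat n U" and V: "unitary_mat n V"
  shows "unitary_mat n (U * V)"
proof -
  note U = unitary_matD[OF U] and V = unitary_matD[OF V]
  have "mat_adjoint (U * V) * (U * V) = mat_adjoint V * (mat_adjoint U * U) * V"
    using U(1) V(1) by (simp add: mat_adjoint_mult carrier_matD assoc_mult_mat[of _ n n _ n _ n]
        mult_carrier_mat[of _ n n _ n])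
  then show ?thesis using U V unfolding unitary_mat_def by simp
qed

lemma unitary_mat_conj_cancel:
  assumes U: "unitary_mat n U" and A: "A \<in> carrier_mat n n"
  shows "U * (mat_adjoint U * A * U) * mat_adjoint U = A"
proof -
  have "U * (mat_adjoint U * A * U) * mat_adjoint U
      = (U * mat_adjoint U) * A * (U * mat_adjoint U)"
    using unitary_matD[OF U] A
    by (simp add: assoc_mult_mat[of _ n n _ n _ n] mult_carrier_mat[of _ n n _ n])
  then show ?thesis using A unitary_mat_right_inverse[OF U] by simp
qed

lemma cscalar_col_unitary_mat:
  assumes "unitary_mat n U" "i < n" "j < n"
  shows "col U j \<bullet>c col U i = (if i = j then 1 else 0)"
  using index_mat_adjoint_mult[of i U j U] unitary_matD[OF assms(1)] assms(2,3)
  by (simp add: carrier_matD)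

lemma unitary_mat_of_orthonormal_cols:
  assumes "length ws = n" "set ws \<subseteq> carrier_vec n"
    and orth: "\<And>i j. i < n \<Longrightarrow> j < n \<Longrightarrow> ws ! j \<bullet>c ws ! i = (if i = j then 1 else 0)"
  shows "unitary_mat n (mat_of_cols n ws)"
proof -
  let ?W = "mat_of_cols n ws"
  have W: "?W \<in> carrier_mat n n" using mat_of_cols_carrier(1)[of n ws] assms(1) by simp
  have "mat_adjoint ?W * ?W = 1\<^sub>m n"
  proof (rule eq_matI)
    fix i j assume "i < dim_row (1\<^sub>m n :: complex mat)" "j < dim_col (1\<^sub>m n :: complex mat)"
    then have i: "i < n" and j: "j < n" by simp_all
    have "(mat_adjoint ?W * ?W) $$ (i, j) = col ?W j \<bullet>c col ?W i"
      using i j assms(1) by (intro index_mat_adjoint_mult) simp_all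
    also have "\<dots> = ws ! j \<bullet>c ws ! i"
      using i j assms(1,2) by (simp add: subsetD)
    finally show "(mat_adjoint ?W * ?W) $$ (i, j) = 1\<^sub>m n $$ (i, j)"
      using orth[OF i j] i j by simp
  qed (use W in auto)
  with W show ?thesis unfolding unitary_mat_def by simp
qed

text \<open>Gram--Schmidt applied to a basis completion of a unit vector \<open>v\<close> keeps \<open>v\<close> as its first
  vector, so normalising the result gives a unitary matrix with first column \<open>v\<close>.\<close>

lemma unitary_mat_with_first_col:
  assumes v: "v \<in> carrier_vec n" and unit: "v \<bullet>c v = 1"
  obtains W where "unitary_mat n W" "col W 0 = v"
proof -
  have v0: "v \<noteq> 0\<^sub>v n" using unit by auto
  then have n: "n > 0" using v by (auto intro!: eq_vecI)
  interpret cof_vec_space n "TYPE(complex)" .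
  define b where "b = basis_completion v"
  from basis_completion[OF v v0, folded b_def]
  have b: "distinct b" "\<not> lin_dep (set b)" "set b \<subseteq> carrier_vec n" "hd b = v" "length b = n"
    by auto
  then obtain vs where bv: "b = v # vs" using n by (cases b) auto
  define ws0 where "ws0 = gram_schmidt n b"
  from gram_schmidt_result[OF b(3,1,2) ws0_def]
  have ws0: "corthogonal ws0" "set ws0 \<subseteq> carrier_vec n" "length ws0 = n" using b(5) by auto
  have "hd ws0 = v" using gram_schmidt_hd[OF v, of vs] bv ws0_def by simp
  then have ws00: "ws0 ! 0 = v" using ws0(3) n by (cases ws0) auto
  define ws where "ws = map normalize_vec ws0"
  have ws: "length ws = n" "set ws \<subseteq> carrier_vec n"
    using ws0 unfolding ws_def by auto
  have orth: "ws ! j \<bullet>c ws ! i = (if i = j then 1 else 0)" if "i < n" "j < n" for i j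
    using cscalar_normalize_corthogonal[OF ws0(1,2)] that ws0(3) by (simp add: ws_def)
  have "ws ! 0 = v" using unit ws00 ws0(3) n by (simp add: ws_def normalize_vec_def)
  then have "col (mat_of_cols n ws) 0 = v"
    using ws n by (subst col_mat_of_cols) auto
  with unitary_mat_of_orthonormal_cols[OF ws orth] show thesis by (rule that)
qed

lemma unitary_mat_with_eigenvector_first_col:
  fixes A :: "complex mat"
  assumes A: "A \<in> carrier_mat n n" and n: "0 < n"
  obtains W e where "unitary_mat n W" "A *\<^sub>v col W 0 = e \<cdot>\<^sub>v col W 0"
proof -
  obtain e where "eigenvalue A e"
    using spectrum_non_empty[OF A n] unfolding spectrum_def by auto
  then obtain v where v: "v \<in> carrier_vec n" "v \<bullet>c v = 1" "eigenvector A v e"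
    using unit_eigenvector_exists[OF A] by blast
  obtain W where "unitary_mat n W" "col W 0 = v"
    using unitary_mat_with_first_col[OF v(1,2)] by blast
  with v(3) show thesis unfolding eigenvector_def by (intro that) auto
qed

section \<open>Spectral theorem for Hermitian matrices\<close>

definition block_diag_scalar :: "complex \<Rightarrow> complex mat \<Rightarrow> complex mat" where
  "block_diag_scalar c X = mat (Suc (dim_row X)) (Suc (dim_col X))
     (\<lambda>(i, j). if i = 0 \<and> j = 0 then c else if i = 0 \<or> j = 0 then 0 else X $$ (i - 1, j - 1))"

lemma dim_block_diag_scalar [simp]:
  "dim_row (block_diag_scalar c X) = Suc (dim_row X)"
  "dim_col (block_diag_scalar c X) = Suc (dim_col X)"
  by (auto simp: block_diag_scalar_def)

lemma block_diag_scalar_carrier [simp]: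
  "X \<in> carrier_mat n m \<Longrightarrow> block_diag_scalar c X \<in> carrier_mat (Suc n) (Suc m)"
  by (metis dim_block_diag_scalar carrier_matD carrier_matI)

lemma index_block_diag_scalar:
  "i < Suc (dim_row X) \<Longrightarrow> j < Suc (dim_col X) \<Longrightarrow> block_diag_scalar c X $$ (i, j) =
     (if i = 0 \<and> j = 0 then c else if i = 0 \<or> j = 0 then 0 else X $$ (i - 1, j - 1))"
  by (auto simp: block_diag_scalar_def)

lemma block_diag_scalar_mult:
  assumes "dim_col X = dim_row Y"
  shows "block_diag_scalar c X * block_diag_scalar d Y = block_diag_scalar (c * d) (X * Y)"
proof (rule eq_matI)
  fix i j assume "i < dim_row (block_diag_scalar (c * d) (X * Y))"
    and "j < dim_col (block_diag_scalar (c * d) (X * Y))"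
  then have i: "i < Suc (dim_row X)" and j: "j < Suc (dim_col Y)" by auto
  let ?B = "block_diag_scalar"
  have "(?B c X * ?B d Y) $$ (i, j)
      = ?B c X $$ (i, 0) * ?B d Y $$ (0, j)
        + (\<Sum>k<dim_row Y. ?B c X $$ (i, Suc k) * ?B d Y $$ (Suc k, j))"
    using i j assms by (simp add: scalar_prod_def atLeast0LessThan del: sum.lessThan_Suc)
      (rule sum.lessThan_Suc_shift)
  also have "\<dots> = ?B (c * d) (X * Y) $$ (i, j)"
  proof (cases "i = 0 \<or> j = 0")
    case True
    then show ?thesis using i j assms by (auto simp: index_block_diag_scalar)
  next
    case False
    then obtain i0 j0 where ij: "i = Suc i0" "j = Suc j0" by (cases i; cases j) auto
    then show ?thesis using i j assms
      by (simp add: index_block_diag_scalar scalar_prod_def atLeast0LessThan)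
  qed
  finally show "(?B c X * ?B d Y) $$ (i, j) = ?B (c * d) (X * Y) $$ (i, j)" .
qed auto

lemma block_diag_scalar_adjoint:
  "mat_adjoint (block_diag_scalar c X) = block_diag_scalar (cnj c) (mat_adjoint X)"
  by (rule eq_matI) (auto simp: index_block_diag_scalar)

lemma block_diag_scalar_one: "block_diag_scalar 1 (1\<^sub>m m) = 1\<^sub>m (Suc m)"
proof (rule eq_matI)
  fix i j assume "i < dim_row (1\<^sub>m (Suc m) :: complex mat)" "j < dim_col (1\<^sub>m (Suc m) :: complex mat)"
  then show "block_diag_scalar 1 (1\<^sub>m m) $$ (i, j) = 1\<^sub>m (Suc m) $$ (i, j)"
    by (cases i; cases j) (simp_all add: index_block_diag_scalar)
qed auto

lemma unitary_mat_block_diag_scalar: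
  "unitary_mat m U \<Longrightarrow> unitary_mat (Suc m) (block_diag_scalar 1 U)"
  unfolding unitary_mat_def block_diag_scalar_adjoint
  by (simp add: block_diag_scalar_mult carrier_matD block_diag_scalar_one)

lemma hermitian_adjoint_conj:
  assumes A: "A \<in> carrier_mat n n" "hermitian A" and W: "W \<in> carrier_mat n n"
  shows "hermitian (mat_adjoint W * A * W)"
proof -
  have "mat_adjoint (mat_adjoint W * A * W) = mat_adjoint W * mat_adjoint (mat_adjoint W * A)"
    using A W by (subst mat_adjoint_mult) (simp_all add: carrier_matD)
  also have "\<dots> = mat_adjoint W * (mat_adjoint A * W)"
    using A W by (subst mat_adjoint_mult) (simp_all add: carrier_matD)
  also have "\<dots> = mat_adjoint W * A * W"
    using A W unfolding hermitian_def by (simp add: assoc_mult_mat[of _ n n _ n _ n])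
  finally show ?thesis unfolding hermitian_def .
qed

lemma unitary_conj_eigenvector_first_col:
  assumes W: "unitary_mat n W" and A: "A \<in> carrier_mat n n" and n: "0 < n"
    and ev: "A *\<^sub>v col W 0 = e \<cdot>\<^sub>v col W 0" and i: "i < n"
  shows "(mat_adjoint W * A * W) $$ (i, 0) = (if i = 0 then e else 0)"
proof -
  have Wc: "W \<in> carrier_mat n n" by (rule unitary_matD[OF W])
  have "(mat_adjoint W * A * W) $$ (i, 0) = (mat_adjoint W * (A * W)) $$ (i, 0)"
    using Wc A by (simp add: assoc_mult_mat[of _ n n _ n _ n])
  also have "\<dots> = col (A * W) 0 \<bullet>c col W i"
    using Wc A i n by (intro index_mat_adjoint_mult) (simp_all add: carrier_matD)
  also have "col (A * W) 0 = e \<cdot>\<^sub>v col W 0"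
    using col_mult2[OF A Wc n] ev by simp
  also have "(e \<cdot>\<^sub>v col W 0) \<bullet>c col W i = e * (col W 0 \<bullet>c col W i)"
    using Wc by (intro cscalar_smult_left) (simp add: carrier_matD)
  finally show ?thesis using cscalar_col_unitary_mat[OF W i n] by simp
qed

lemma hermitian_first_col_block:
  assumes B: "B \<in> carrier_mat (Suc m) (Suc m)" "hermitian B"
    and col0: "\<And>i. i < Suc m \<Longrightarrow> B $$ (i, 0) = (if i = 0 then e else 0)"
  obtains C where "C \<in> carrier_mat m m" "hermitian C" "e \<in> \<real>" "B = block_diag_scalar e C"
proof
  define C where "C = mat m m (\<lambda>(i, j). B $$ (Suc i, Suc j))"
  have sym: "B $$ (i, j) = cnj (B $$ (j, i))" if "i < Suc m" "j < Suc m" for i j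
  proof -
    have "B $$ (i, j) = mat_adjoint B $$ (i, j)" using B(2) by (simp add: hermitian_def)
    also have "\<dots> = cnj (B $$ (j, i))" using B(1) that by (simp add: carrier_matD)
    finally show ?thesis .
  qed
  show "C \<in> carrier_mat m m" unfolding C_def by simp
  show "hermitian C"
  proof -
    have "mat_adjoint C $$ (i, j) = C $$ (i, j)" if "i < m" "j < m" for i j
      using that sym[of "Suc i" "Suc j"] by (simp add: C_def)
    then show ?thesis unfolding hermitian_def by (intro eq_matI) (simp_all add: C_def)
  qed
  have "B $$ (0, 0) = e" using col0[of 0] by simp
  then have e: "cnj e = e" by (metis sym zero_less_Suc)
  then show "e \<in> \<real>" by (simp add: Reals_cnj_iff)
  show "B = block_diag_scalar e C"
  proof (rule eq_matI)
    fix i j assume "i < dim_row (block_diag_scalar e C)" "j < dim_col (block_diag_scalar e C)"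
    then have i: "i < Suc m" and j: "j < Suc m" by (simp_all add: C_def)
    show "B $$ (i, j) = block_diag_scalar e C $$ (i, j)"
    proof (cases "j = 0")
      case True
      then show ?thesis using i col0 by (simp add: index_block_diag_scalar C_def)
    next
      case False
      then show ?thesis using i j sym[of 0 j] col0[OF j] e
        by (cases i) (simp_all add: index_block_diag_scalar C_def)
    qed
  qed (use B in \<open>simp_all add: C_def carrier_matD\<close>)
qed

lemma diagonal_mat_block_diag_scalar:
  assumes "D \<in> carrier_mat m m" "diagonal_mat D"
  shows "diagonal_mat (block_diag_scalar e D)"
  using assms unfolding diagonal_mat_def by (auto simp: index_block_diag_scalar carrier_matD)

lemma unitary_diagonalization_extend:
  assumes W: "unitary_mat (Suc m) W" and A: "A \<in> carrier_mat (Suc m) (Suc m)"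
    and V: "unitary_mat m V" and D: "D \<in> carrier_mat m m"
    and AWC: "mat_adjoint W * A * W = block_diag_scalar e (V * D * mat_adjoint V)"
  defines "U \<equiv> W * block_diag_scalar 1 V"
  shows "A = U * block_diag_scalar e D * mat_adjoint U"
proof -
  have Wc: "W \<in> carrier_mat (Suc m) (Suc m)" and Vc: "V \<in> carrier_mat m m"
    using unitary_matD(1) W V by blast+
  have "A = W * block_diag_scalar e (V * D * mat_adjoint V) * mat_adjoint W"
    using unitary_mat_conj_cancel[OF W A] unfolding AWC by simp
  also have "block_diag_scalar e (V * D * mat_adjoint V)
      = block_diag_scalar 1 V * block_diag_scalar e D * mat_adjoint (block_diag_scalar 1 V)"
    unfolding block_diag_scalar_adjoint using Vc D by (simp add: block_diag_scalar_mult carrier_matD)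
  also have "W * (block_diag_scalar 1 V * block_diag_scalar e D * mat_adjoint (block_diag_scalar 1 V))
      * mat_adjoint W = U * block_diag_scalar e D * mat_adjoint U"
    unfolding U_def using Wc Vc D
    by (simp add: mat_adjoint_mult carrier_matD assoc_mult_mat[of _ "Suc m" "Suc m" _ "Suc m" _ "Suc m"]
        mult_carrier_mat[of _ "Suc m" "Suc m" _ "Suc m"])
  finally show ?thesis .
qed

theorem hermitian_spectral_decomposition:
  assumes "A \<in> carrier_mat n n" "hermitian A"
  obtains U D where "unitary_mat n U" "D \<in> carrier_mat n n" "diagonal_mat D"
    "\<forall>i<n. D $$ (i, i) \<in> \<real>" "A = U * D * mat_adjoint U"
  using assms
proof (induction n arbitrary: A thesis)
  case 0
  have "unitary_mat 0 (1\<^sub>m 0)" unfolding unitary_mat_def by simp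
  moreover have "A = 1\<^sub>m 0 * A * mat_adjoint (1\<^sub>m 0)" using "0.prems"(2) by simp
  ultimately show ?case using "0.prems" by (simp add: diagonal_mat_def)
next
  case (Suc m)
  have A: "A \<in> carrier_mat (Suc m) (Suc m)" "hermitian A" by fact+
  obtain W e where W: "unitary_mat (Suc m) W" and ev: "A *\<^sub>v col W 0 = e \<cdot>\<^sub>v col W 0"
    using unitary_mat_with_eigenvector_first_col[OF A(1)] by blast
  have Wc: "W \<in> carrier_mat (Suc m) (Suc m)" by (rule unitary_matD[OF W])
  from ev have "\<And>i. i < Suc m \<Longrightarrow> (mat_adjoint W * A * W) $$ (i, 0) = (if i = 0 then e else 0)"
    by (rule unitary_conj_eigenvector_first_col[OF W A(1) zero_less_Suc])
  moreover have "mat_adjoint W * A * W \<in> carrier_mat (Suc m) (Suc m)"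
    using A(1) Wc by (intro mult_carrier_mat) auto
  ultimately obtain C where C: "C \<in> carrier_mat m m" "hermitian C" "e \<in> \<real>"
    and AWC: "mat_adjoint W * A * W = block_diag_scalar e C"
    using hermitian_first_col_block hermitian_adjoint_conj[OF A Wc] by metis
  obtain V D where V: "unitary_mat m V" and D: "D \<in> carrier_mat m m" "diagonal_mat D"
    "\<forall>i<m. D $$ (i, i) \<in> \<real>" and CVD: "C = V * D * mat_adjoint V"
    using Suc.IH[OF _ C(1,2)] by blast
  define U where "U = W * block_diag_scalar 1 V"
  have "unitary_mat (Suc m) U"
    unfolding U_def by (intro unitary_mat_mult W unitary_mat_block_diag_scalar V)
  moreover have "A = U * block_diag_scalar e D * mat_adjoint U"
    unfolding U_def using unitary_diagonalization_extend[OF W A(1) V D(1)] AWC CVD by blast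
  moreover have "\<forall>i<Suc m. block_diag_scalar e D $$ (i, i) \<in> \<real>"
    using D(1,3) C(3) by (auto simp: index_block_diag_scalar carrier_matD less_Suc_eq_0_disj)
  ultimately show ?case
    using Suc.prems(1) block_diag_scalar_carrier[OF D(1)] diagonal_mat_block_diag_scalar[OF D(1,2)]
    by blast
qed

section \<open>Expectation values in states\<close>

lemma finite_real_eigenvalues:
  fixes A :: "complex mat"
  assumes "A \<in> carrier_mat n n"
  shows "finite {x. eigenvalue A (of_real x)}"
proof (rule finite_subset)
  show "{x. eigenvalue A (of_real x)} \<subseteq> Re ` spectrum A"
    unfolding spectrum_def by (auto intro: image_eqI[where x = "of_real _"])
  show "finite (Re ` spectrum A)" using card_finite_spectrum(1)[OF assms] by simp
qed

lemma eigenvector_col_unitary_diagonalization: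
  assumes U: "unitary_mat n U" and D: "D \<in> carrier_mat n n" "diagonal_mat D"
    and AUD: "A = U * D * mat_adjoint U" and i: "i < n"
  shows "eigenvector A (col U i) (D $$ (i, i))"
proof -
  have Uc: "U \<in> carrier_mat n n" by (rule unitary_matD[OF U])
  have Ac: "A \<in> carrier_mat n n" unfolding AUD using Uc D(1) by (intro mult_carrier_mat) auto
  have "A * U = U * D * (mat_adjoint U * U)"
    unfolding AUD using Uc D(1)
    by (simp add: assoc_mult_mat[of _ n n _ n _ n] mult_carrier_mat[of _ n n _ n])
  then have AU: "A * U = U * D" using Uc D(1) unitary_matD(2)[OF U] by simp
  have "A *\<^sub>v col U i = col (U * D) i"
    using col_mult2[OF Ac Uc i] AU by simp
  also have "\<dots> = D $$ (i, i) \<cdot>\<^sub>v col U i"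
  proof (rule eq_vecI)
    fix k assume "k < dim_vec (D $$ (i, i) \<cdot>\<^sub>v col U i)"
    then have k: "k < n" using Uc by simp
    have "col (U * D) i $ k = (\<Sum>j<n. U $$ (k, j) * D $$ (j, i))"
      using Uc D(1) i k by (simp add: scalar_prod_def atLeast0LessThan)
    also have "\<dots> = U $$ (k, i) * D $$ (i, i)"
      using D i unfolding diagonal_mat_def by (subst sum.remove[of _ i]) auto
    finally show "col (U * D) i $ k = (D $$ (i, i) \<cdot>\<^sub>v col U i) $ k"
      using Uc i k by simp
  qed (use Uc D(1) in simp)
  finally have "A *\<^sub>v col U i = D $$ (i, i) \<cdot>\<^sub>v col U i" .
  moreover have "col U i \<noteq> 0\<^sub>v n"
    using cscalar_col_unitary_mat[OF U i i] by auto
  ultimately show ?thesis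
    unfolding eigenvector_def using Ac Uc i by (auto simp: carrier_vecI)
qed

lemma mtrace_mult_diagonal:
  fixes X D :: "complex mat"
  assumes X: "X \<in> carrier_mat n n" and D: "D \<in> carrier_mat n n" "diagonal_mat D"
  shows "mtrace (X * D) = (\<Sum>i<n. X $$ (i, i) * D $$ (i, i))"
proof -
  have "mtrace (X * D) = (\<Sum>i<n. \<Sum>j<n. X $$ (i, j) * D $$ (j, i))"
    using X D by (simp add: mtrace_def scalar_prod_def atLeast0LessThan)
  also have "\<dots> = (\<Sum>i<n. X $$ (i, i) * D $$ (i, i))"
  proof (rule sum.cong[OF refl])
    fix i assume "i \<in> {..<n}"
    then show "(\<Sum>j<n. X $$ (i, j) * D $$ (j, i)) = X $$ (i, i) * D $$ (i, i)"
      using D unfolding diagonal_mat_def by (subst sum.remove[of _ i]) auto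
  qed
  finally show ?thesis .
qed

lemma mtrace_unitary_conj:
  assumes U: "unitary_mat n U" and R: "R \<in> carrier_mat n n"
  shows "mtrace (mat_adjoint U * R * U) = mtrace R"
proof -
  have Uc: "U \<in> carrier_mat n n" by (rule unitary_matD[OF U])
  have "mtrace (mat_adjoint U * R * U) = mtrace (U * (mat_adjoint U * R))"
    using Uc R by (intro mtrace_mult_comm[of _ n n]) (simp_all add: mult_carrier_mat[of _ n n _ n])
  also have "U * (mat_adjoint U * R) = (U * mat_adjoint U) * R"
    using Uc R by (simp add: assoc_mult_mat[of _ n n _ n _ n])
  finally show ?thesis using unitary_mat_right_inverse[OF U] R by simp
qed

lemma mtrace_unitary_diagonalization_mult:
  assumes U: "unitary_mat n U" and D: "D \<in> carrier_mat n n" "diagonal_mat D"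
    and R: "R \<in> carrier_mat n n"
  shows "mtrace (U * D * mat_adjoint U * R) = (\<Sum>i<n. (mat_adjoint U * R * U) $$ (i, i) * D $$ (i, i))"
proof -
  have Uc: "U \<in> carrier_mat n n" by (rule unitary_matD[OF U])
  have "mtrace (U * D * mat_adjoint U * R) = mtrace ((U * D) * (mat_adjoint U * R))"
    using Uc D(1) R by (simp add: assoc_mult_mat[of _ n n _ n _ n] mult_carrier_mat[of _ n n _ n])
  also have "\<dots> = mtrace ((mat_adjoint U * R) * (U * D))"
    using Uc D(1) R by (intro mtrace_mult_comm[of _ n n]) (simp_all add: mult_carrier_mat[of _ n n _ n])
  also have "(mat_adjoint U * R) * (U * D) = (mat_adjoint U * R * U) * D"
    using Uc D(1) R by (simp add: assoc_mult_mat[of _ n n _ n _ n] mult_carrier_mat[of _ n n _ n])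
  also have "mtrace \<dots> = (\<Sum>i<n. (mat_adjoint U * R * U) $$ (i, i) * D $$ (i, i))"
    using Uc D R by (intro mtrace_mult_diagonal) (auto intro: mult_carrier_mat)
  finally show ?thesis .
qed

lemma psd_adjoint_conj_diag_nonneg:
  assumes R: "psd n R" and U: "U \<in> carrier_mat n n" and i: "i < n"
  shows "0 \<le> Re ((mat_adjoint U * R * U) $$ (i, i))"
proof -
  have Rc: "R \<in> carrier_mat n n" using R unfolding psd_def by simp
  have "(mat_adjoint U * R * U) $$ (i, i) = (mat_adjoint U * (R * U)) $$ (i, i)"
    using Rc U by (simp add: assoc_mult_mat[of _ n n _ n _ n])
  also have "\<dots> = col (R * U) i \<bullet>c col U i"
    using Rc U i by (intro index_mat_adjoint_mult) (simp_all add: carrier_matD)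
  also have "col (R * U) i = R *\<^sub>v col U i" by (rule col_mult2[OF Rc U i])
  finally have "(mat_adjoint U * R * U) $$ (i, i) = (R *\<^sub>v col U i) \<bullet>c col U i" .
  moreover have "col U i \<in> carrier_vec n" using U by (simp add: carrier_vecI carrier_matD)
  ultimately show ?thesis using R unfolding psd_def by simp
qed

lemma density_expectation_bounds:
  assumes A: "A \<in> carrier_mat n n" "hermitian A" and R: "density n R"
  shows "lambda_min A \<le> Re (mtrace (A * R)) \<and> Re (mtrace (A * R)) \<le> lambda_max A"
proof -
  obtain U D where U: "unitary_mat n U" and D: "D \<in> carrier_mat n n" "diagonal_mat D"
    "\<forall>i<n. D $$ (i, i) \<in> \<real>" and AUD: "A = U * D * mat_adjoint U"
    using hermitian_spectral_decomposition[OF A] by blast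
  have Uc: "U \<in> carrier_mat n n" by (rule unitary_matD[OF U])
  have Rc: "R \<in> carrier_mat n n" and Rpsd: "psd n R" and Rtr: "mtrace R = 1"
    using R unfolding density_def psd_def by auto
  define S where "S = {x. eigenvalue A (of_real x)}"
  define w where "w i = Re ((mat_adjoint U * R * U) $$ (i, i))" for i
  define d where "d i = Re (D $$ (i, i))" for i
  have Dd: "D $$ (i, i) = of_real (d i)" if "i < n" for i
    using D(3) that unfolding d_def by simp
  have dS: "d i \<in> S" if "i < n" for i
    using eigenvector_col_unitary_diagonalization[OF U D(1,2) AUD that] Dd[OF that]
    unfolding S_def eigenvalue_def by auto
  have w: "0 \<le> w i" if "i < n" for i
    unfolding w_def by (rule psd_adjoint_conj_diag_nonneg[OF Rpsd Uc that])
  have "(\<Sum>i<n. w i) = Re (mtrace (mat_adjoint U * R * U))"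
    unfolding w_def mtrace_def using Uc Rc by simp
  then have w1: "(\<Sum>i<n. w i) = 1"
    unfolding mtrace_unitary_conj[OF U Rc] Rtr by simp
  have "Re (mtrace (A * R)) = (\<Sum>i<n. Re ((mat_adjoint U * R * U) $$ (i, i) * D $$ (i, i)))"
    unfolding AUD mtrace_unitary_diagonalization_mult[OF U D(1,2) Rc] by simp
  also have "\<dots> = (\<Sum>i<n. w i * d i)"
    by (intro sum.cong refl) (simp add: Dd w_def)
  finally have tr: "Re (mtrace (A * R)) = (\<Sum>i<n. w i * d i)" .
  have "finite S" unfolding S_def by (rule finite_real_eigenvalues[OF A(1)])
  then have "(\<Sum>i<n. w i * Min S) \<le> (\<Sum>i<n. w i * d i)"
      "(\<Sum>i<n. w i * d i) \<le> (\<Sum>i<n. w i * Max S)"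
    using dS w by (auto intro!: sum_mono mult_left_mono)
  then show ?thesis
    unfolding lambda_min_def lambda_max_def S_def[symmetric] tr
    by (simp add: sum_distrib_right[symmetric] w1)
qed

lemma proj_density:
  assumes psi: "\<psi> \<in> carrier_vec n" and unit: "\<psi> \<bullet>c \<psi> = 1"
  shows "density n (proj \<psi>)"
proof -
  have dim: "dim_vec \<psi> = n" using psi by simp
  have P: "proj \<psi> \<in> carrier_mat n n" unfolding proj_def dim by simp
  have herm: "hermitian (proj \<psi>)"
    unfolding hermitian_def by (rule eq_matI) (simp_all add: proj_def)
  have Pv: "proj \<psi> *\<^sub>v v = (v \<bullet>c \<psi>) \<cdot>\<^sub>v \<psi>" if v: "v \<in> carrier_vec n" for v
  proof (rule eq_vecI)
    fix r assume "r < dim_vec ((v \<bullet>c \<psi>) \<cdot>\<^sub>v \<psi>)"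
    then have r: "r < n" using dim by simp
    have "(proj \<psi> *\<^sub>v v) $ r = \<psi> $ r * (\<Sum>c<n. v $ c * cnj (\<psi> $ c))"
      using r v dim by (simp add: proj_def scalar_prod_def atLeast0LessThan sum_distrib_left ac_simps)
    then show "(proj \<psi> *\<^sub>v v) $ r = ((v \<bullet>c \<psi>) \<cdot>\<^sub>v \<psi>) $ r"
      using r dim by (simp add: cscalar_eq_sum mult.commute)
  qed (use dim in \<open>simp add: proj_def\<close>)
  have "0 \<le> Re ((proj \<psi> *\<^sub>v v) \<bullet>c v)" if v: "v \<in> carrier_vec n" for v
  proof -
    have "(proj \<psi> *\<^sub>v v) \<bullet>c v = (v \<bullet>c \<psi>) * cnj (v \<bullet>c \<psi>)"
      unfolding Pv[OF v] using dim v by (simp add: cscalar_smult_left cscalar_commute[of v \<psi>])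
    then show ?thesis by (simp add: complex_norm_square[symmetric])
  qed
  moreover have "mtrace (proj \<psi>) = 1"
    using unit dim unfolding mtrace_def cscalar_eq_sum by (simp add: proj_def)
  ultimately show ?thesis unfolding density_def psd_def using P herm by simp
qed

lemma mtrace_mult_proj_eigenvector:
  assumes A: "A \<in> carrier_mat n n" and ev: "eigenvector A \<psi> l" and unit: "\<psi> \<bullet>c \<psi> = 1"
  shows "mtrace (A * proj \<psi>) = l"
proof -
  have psi: "dim_vec \<psi> = n" and Apsi: "A *\<^sub>v \<psi> = l \<cdot>\<^sub>v \<psi>"
    using ev A unfolding eigenvector_def by auto
  have "(A * proj \<psi>) $$ (i, i) = (A *\<^sub>v \<psi>) $ i * cnj (\<psi> $ i)" if "i < n" for i
    using A that psi
    by (simp add: proj_def scalar_prod_def atLeast0LessThan sum_distrib_left ac_simps)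
  then have "mtrace (A * proj \<psi>) = (A *\<^sub>v \<psi>) \<bullet>c \<psi>"
    unfolding mtrace_def cscalar_eq_sum using A psi by simp
  also have "\<dots> = l" unfolding Apsi using unit by (simp add: cscalar_smult_left)
  finally show ?thesis .
qed

lemma hermitian_extreme_unit_eigenvectors:
  assumes A: "A \<in> carrier_mat n n" "hermitian A" and n: "0 < n"
  obtains \<psi> \<phi> where "\<psi> \<in> carrier_vec n" "\<psi> \<bullet>c \<psi> = 1" "eigenvector A \<psi> (of_real (lambda_max A))"
    "\<phi> \<in> carrier_vec n" "\<phi> \<bullet>c \<phi> = 1" "eigenvector A \<phi> (of_real (lambda_min A))"
proof -
  define S where "S = {x. eigenvalue A (of_real x)}"
  obtain U D where U: "unitary_mat n U" and D: "D \<in> carrier_mat n n" "diagonal_mat D"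
    "\<forall>i<n. D $$ (i, i) \<in> \<real>" and AUD: "A = U * D * mat_adjoint U"
    using hermitian_spectral_decomposition[OF A] by blast
  have "eigenvector A (col U 0) (of_real (Re (D $$ (0, 0))))"
    using eigenvector_col_unitary_diagonalization[OF U D(1,2) AUD n] D(3) n by simp
  then have "S \<noteq> {}" unfolding S_def eigenvalue_def by blast
  moreover have "finite S" unfolding S_def by (rule finite_real_eigenvalues[OF A(1)])
  ultimately have "lambda_max A \<in> S" "lambda_min A \<in> S"
    unfolding lambda_max_def lambda_min_def S_def[symmetric] by simp_all
  then show thesis
    using unit_eigenvector_exists[OF A(1)] that unfolding S_def by (metis mem_Collect_eq)
qed

section \<open>Distinguishing two states by a POVM\<close>

lemma sum_abs_eq_twice_sum_nonneg:
  fixes a :: "'i \<Rightarrow> real"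
  assumes "finite S" "(\<Sum>i\<in>S. a i) = 0"
  shows "(\<Sum>i\<in>S. \<bar>a i\<bar>) = 2 * (\<Sum>i\<in>{i\<in>S. 0 \<le> a i}. a i)"
proof -
  let ?P = "S \<inter> {i. 0 \<le> a i}" and ?N = "S \<inter> - {i. 0 \<le> a i}"
  have "(\<Sum>i\<in>S. \<bar>a i\<bar>) = (\<Sum>i\<in>S. if 0 \<le> a i then a i else - a i)"
    by (intro sum.cong) auto
  also have "\<dots> = (\<Sum>i\<in>?P. a i) - (\<Sum>i\<in>?N. a i)"
    using assms(1) by (simp add: sum.If_cases sum_negf)
  finally have "(\<Sum>i\<in>S. \<bar>a i\<bar>) = (\<Sum>i\<in>?P. a i) - (\<Sum>i\<in>?N. a i)" .
  moreover have "(\<Sum>i\<in>?P. a i) + (\<Sum>i\<in>?N. a i) = 0"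
    using assms sum.If_cases[of S "\<lambda>i. 0 \<le> a i" a a] by simp
  moreover have "{i\<in>S. 0 \<le> a i} = ?P" by auto
  ultimately show ?thesis by simp
qed

lemma twice_sum_le_sum_abs:
  fixes a :: "'i \<Rightarrow> real"
  assumes "finite S" "(\<Sum>i\<in>S. a i) = 0" "B \<subseteq> S"
  shows "2 * (\<Sum>i\<in>B. a i) \<le> (\<Sum>i\<in>S. \<bar>a i\<bar>)"
proof -
  have split: "(\<Sum>i\<in>S. f i) = (\<Sum>i\<in>B. f i) + (\<Sum>i\<in>S - B. f i)" for f :: "'i \<Rightarrow> real"
    using assms(1,3) by (metis sum.subset_diff add.commute)
  have "(\<Sum>i\<in>B. a i) \<le> (\<Sum>i\<in>B. \<bar>a i\<bar>)" "- (\<Sum>i\<in>S - B. a i) \<le> (\<Sum>i\<in>S - B. \<bar>a i\<bar>)"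
    by (auto simp: sum_negf[symmetric] intro!: sum_mono)
  then show ?thesis using split[of a] split[of "\<lambda>i. \<bar>a i\<bar>"] assms(2) by linarith
qed

lemma msum_carrier [simp]: "msum n M A \<in> carrier_mat n n"
  by (simp add: msum_def)

lemma msum_hermitian:
  assumes "\<And>i. i \<in> A \<Longrightarrow> M i \<in> carrier_mat n n" "\<And>i. i \<in> A \<Longrightarrow> hermitian (M i)"
  shows "hermitian (msum n M A)"
proof -
  have "cnj (M i $$ (c, r)) = M i $$ (r, c)" if "i \<in> A" "r < n" "c < n" for i r c
  proof -
    have "M i $$ (r, c) = mat_adjoint (M i) $$ (r, c)"
      using assms(2)[OF that(1)] by (simp add: hermitian_def)
    also have "\<dots> = cnj (M i $$ (c, r))"
      using assms(1)[OF that(1)] that(2,3) by (simp add: carrier_matD)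
    finally show ?thesis by simp
  qed
  then show ?thesis unfolding hermitian_def by (intro eq_matI) (simp_all add: msum_def)
qed

lemma mtrace_msum_mult:
  assumes "finite A" "\<And>i. i \<in> A \<Longrightarrow> M i \<in> carrier_mat n n" and X: "X \<in> carrier_mat n n"
  shows "mtrace (msum n M A * X) = (\<Sum>i\<in>A. mtrace (M i * X))"
proof -
  have "mtrace (msum n M A * X) = (\<Sum>r<n. \<Sum>k<n. \<Sum>i\<in>A. M i $$ (r, k) * X $$ (k, r))"
    using X by (simp add: mtrace_def msum_def scalar_prod_def atLeast0LessThan sum_distrib_right)
  also have "\<dots> = (\<Sum>i\<in>A. \<Sum>r<n. \<Sum>k<n. M i $$ (r, k) * X $$ (k, r))"
    by (simp add: sum.swap[of _ A])
  also have "\<dots> = (\<Sum>i\<in>A. mtrace (M i * X))"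
  proof (rule sum.cong[OF refl])
    fix i assume "i \<in> A"
    then have "M i \<in> carrier_mat n n" by (rule assms(2))
    then show "(\<Sum>r<n. \<Sum>k<n. M i $$ (r, k) * X $$ (k, r)) = mtrace (M i * X)"
      using X by (simp add: mtrace_def scalar_prod_def atLeast0LessThan)
  qed
  finally show ?thesis .
qed

lemma povmD:
  assumes "povm n Out M"
  shows "finite Out" "\<And>i. i \<in> Out \<Longrightarrow> M i \<in> carrier_mat n n" "\<And>i. i \<in> Out \<Longrightarrow> hermitian (M i)"
    "msum n M Out = 1\<^sub>m n"
  using assms unfolding povm_def psd_def by auto

lemma densityD:
  assumes "density n R"
  shows "R \<in> carrier_mat n n" "hermitian R" "mtrace R = 1"
  using assms unfolding density_def psd_def by auto

lemma povm_outcome_differences: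
  assumes P: "povm n Out M" and R: "density n \<rho>" and S: "density n \<sigma>"
  shows "\<And>i. i \<in> Out \<Longrightarrow> cmod (mtrace (M i * (\<rho> - \<sigma>))) = \<bar>Re (mtrace (M i * (\<rho> - \<sigma>)))\<bar>"
    and "\<And>B. B \<subseteq> Out \<Longrightarrow>
      (\<Sum>i\<in>B. Re (mtrace (M i * (\<rho> - \<sigma>)))) = Re (mtrace (msum n M B * (\<rho> - \<sigma>)))"
    and "(\<Sum>i\<in>Out. Re (mtrace (M i * (\<rho> - \<sigma>)))) = 0"
proof -
  note P = povmD[OF P] and R = densityD[OF R] and S = densityD[OF S]
  have Dc: "\<rho> - \<sigma> \<in> carrier_mat n n" by (rule minus_carrier_mat[OF S(1)])
  have Dh: "hermitian (\<rho> - \<sigma>)"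
    using R S unfolding hermitian_def by (simp add: mat_adjoint_minus[of _ n n])
  show "cmod (mtrace (M i * (\<rho> - \<sigma>))) = \<bar>Re (mtrace (M i * (\<rho> - \<sigma>)))\<bar>" if "i \<in> Out" for i
    by (subst mtrace_mult_hermitian_real[OF P(2,3)[OF that] Dc Dh]) simp
  show sum: "(\<Sum>i\<in>B. Re (mtrace (M i * (\<rho> - \<sigma>)))) = Re (mtrace (msum n M B * (\<rho> - \<sigma>)))"
    if "B \<subseteq> Out" for B
  proof -
    have "mtrace (msum n M B * (\<rho> - \<sigma>)) = (\<Sum>i\<in>B. mtrace (M i * (\<rho> - \<sigma>)))"
      using that P(1,2) by (intro mtrace_msum_mult[OF _ _ Dc]) (auto intro: finite_subset)
    then show ?thesis by (simp add: Re_sum)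
  qed
  have "mtrace (\<rho> - \<sigma>) = 0" using R S by (simp add: mtrace_minus[of _ n])
  then show "(\<Sum>i\<in>Out. Re (mtrace (M i * (\<rho> - \<sigma>)))) = 0"
    using sum[of Out] P(4) left_mult_one_mat[OF Dc] by simp
qed

lemma povm_distance_le_gap:
  assumes P: "povm n Out M" and R: "density n \<rho>" and S: "density n \<sigma>"
  obtains B where "B \<subseteq> Out" "(\<Sum>i\<in>Out. cmod (mtrace (M i * (\<rho> - \<sigma>))))
      \<le> 2 * (lambda_max (msum n M B) - lambda_min (msum n M B))"
proof
  note Pd = povmD[OF P] and diff = povm_outcome_differences[OF P R S]
  define a where "a i = Re (mtrace (M i * (\<rho> - \<sigma>)))" for i
  define B where "B = {i \<in> Out. 0 \<le> a i}"
  show B: "B \<subseteq> Out" unfolding B_def by auto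
  have "(\<Sum>i\<in>Out. cmod (mtrace (M i * (\<rho> - \<sigma>)))) = (\<Sum>i\<in>Out. \<bar>a i\<bar>)"
    unfolding a_def using diff(1) by (rule sum.cong[OF refl])
  also have "\<dots> = 2 * (\<Sum>i\<in>B. a i)"
    unfolding B_def using Pd(1) diff(3) unfolding a_def by (rule sum_abs_eq_twice_sum_nonneg)
  also have "(\<Sum>i\<in>B. a i) = Re (mtrace (msum n M B * \<rho>)) - Re (mtrace (msum n M B * \<sigma>))"
    unfolding a_def diff(2)[OF B] using densityD(1)[OF R] densityD(1)[OF S]
    by (simp add: mtrace_mult_minus[of _ n])
  also have "\<dots> \<le> lambda_max (msum n M B) - lambda_min (msum n M B)"
  proof -
    have "hermitian (msum n M B)" using B Pd(2,3) by (intro msum_hermitian) auto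
    then show ?thesis
      using density_expectation_bounds[OF msum_carrier _ R] density_expectation_bounds[OF msum_carrier _ S]
      by fastforce
  qed
  finally show "(\<Sum>i\<in>Out. cmod (mtrace (M i * (\<rho> - \<sigma>))))
      \<le> 2 * (lambda_max (msum n M B) - lambda_min (msum n M B))" by simp
qed

lemma povm_distance_ge:
  assumes P: "povm n Out M" and R: "density n \<rho>" and S: "density n \<sigma>" and B: "B \<subseteq> Out"
  shows "2 * Re (mtrace (msum n M B * (\<rho> - \<sigma>))) \<le> (\<Sum>i\<in>Out. cmod (mtrace (M i * (\<rho> - \<sigma>))))"
proof -
  note diff = povm_outcome_differences[OF P R S]
  have "(\<Sum>i\<in>Out. cmod (mtrace (M i * (\<rho> - \<sigma>))))
      = (\<Sum>i\<in>Out. \<bar>Re (mtrace (M i * (\<rho> - \<sigma>)))\<bar>)"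
    using diff(1) by (rule sum.cong[OF refl])
  then show ?thesis
    using twice_sum_le_sum_abs[OF povmD(1)[OF P] diff(3) B] diff(2)[OF B] by simp
qed

lemma Kstar_eq_gap_at_eigenprojections:
  assumes P: "povm n Out M" and A: "A \<subseteq> Out"
    and opt: "\<And>B. B \<subseteq> Out \<Longrightarrow>
      lambda_max (msum n M B) - lambda_min (msum n M B) \<le> lambda_max (msum n M A) - lambda_min (msum n M A)"
    and psi: "\<psi> \<in> carrier_vec n" "\<psi> \<bullet>c \<psi> = 1"
      "eigenvector (msum n M A) \<psi> (of_real (lambda_max (msum n M A)))"
    and phi: "\<phi> \<in> carrier_vec n" "\<phi> \<bullet>c \<phi> = 1"
      "eigenvector (msum n M A) \<phi> (of_real (lambda_min (msum n M A)))"
  shows "Kstar n Out M = lambda_max (msum n M A) - lambda_min (msum n M A)"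
    and "2 * Kstar n Out M = (\<Sum>i\<in>Out. cmod (mtrace (M i * (proj \<psi> - proj \<phi>))))"
proof -
  define gap where "gap = lambda_max (msum n M A) - lambda_min (msum n M A)"
  define F where "F \<rho> \<sigma> = (1/2) * (\<Sum>i\<in>Out. cmod (mtrace (M i * (\<rho> - \<sigma>))))" for \<rho> \<sigma>
  define K where "K = {F \<rho> \<sigma> | \<rho> \<sigma>. density n \<rho> \<and> density n \<sigma>}"
  have Kstar: "Kstar n Out M = Sup K" unfolding Kstar_def K_def F_def ..
  have upper: "x \<le> gap" if "x \<in> K" for x
  proof -
    obtain \<rho> \<sigma> where x: "x = F \<rho> \<sigma>" and R: "density n \<rho>" and S: "density n \<sigma>"
      using \<open>x \<in> K\<close> unfolding K_def by blast
    obtain B where B: "B \<subseteq> Out"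
      and "2 * F \<rho> \<sigma> \<le> 2 * (lambda_max (msum n M B) - lambda_min (msum n M B))"
      using povm_distance_le_gap[OF P R S] unfolding F_def by auto
    then have "x \<le> lambda_max (msum n M B) - lambda_min (msum n M B)" unfolding x by simp
    also have "\<dots> \<le> gap" unfolding gap_def by (rule opt[OF B])
    finally show ?thesis .
  qed
  have R: "density n (proj \<psi>)" by (rule proj_density[OF psi(1,2)])
  have S: "density n (proj \<phi>)" by (rule proj_density[OF phi(1,2)])
  have "mtrace (msum n M A * (proj \<psi> - proj \<phi>))
      = mtrace (msum n M A * proj \<psi>) - mtrace (msum n M A * proj \<phi>)"
    by (rule mtrace_mult_minus[OF msum_carrier densityD(1)[OF R] densityD(1)[OF S]])
  also have "\<dots> = of_real gap"
    unfolding gap_def mtrace_mult_proj_eigenvector[OF msum_carrier psi(3,2)]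
      mtrace_mult_proj_eigenvector[OF msum_carrier phi(3,2)] by simp
  finally have "gap \<le> F (proj \<psi>) (proj \<phi>)"
    using povm_distance_ge[OF P R S A] unfolding F_def by simp
  moreover have K_at: "F (proj \<psi>) (proj \<phi>) \<in> K" unfolding K_def using R S by blast
  ultimately have F_at: "F (proj \<psi>) (proj \<phi>) = gap" using upper by fastforce
  have "Sup K = gap"
    using K_at upper unfolding F_at by (rule cSup_eq_maximum)
  then show "Kstar n Out M = gap"
    "2 * Kstar n Out M = (\<Sum>i\<in>Out. cmod (mtrace (M i * (proj \<psi> - proj \<phi>))))"
    using F_at unfolding Kstar F_def by simp_all
qed

theorem mainTheorem8:
  fixes n :: nat and Out :: "'i set" and M :: "'i \<Rightarrow> complex mat"
  assumes "n \<ge> 2" and "povm n Out M"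
  shows "Kstar n Out M =
           Max ((\<lambda>A. lambda_max (msum n M A) - lambda_min (msum n M A)) ` Pow Out)
    \<and> (\<forall>Astar \<psi> \<phi>.
          Astar \<subseteq> Out
        \<and> (\<forall>A. A \<subseteq> Out \<longrightarrow>
              lambda_max (msum n M A) - lambda_min (msum n M A)
                \<le> lambda_max (msum n M Astar) - lambda_min (msum n M Astar))
        \<and> \<psi> \<in> carrier_vec n \<and> \<phi> \<in> carrier_vec n
        \<and> \<psi> \<bullet>c \<psi> = 1 \<and> \<phi> \<bullet>c \<phi> = 1 \<and> \<psi> \<bullet>c \<phi> = 0
        \<and> eigenvector (msum n M Astar) \<psi> (complex_of_real (lambda_max (msum n M Astar)))
        \<and> eigenvector (msum n M Astar) \<phi> (complex_of_real (lambda_min (msum n M Astar)))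
        \<longrightarrow> 2 * Kstar n Out M =
              (\<Sum>i\<in>Out. cmod (mtrace (M i * (proj \<psi> - proj \<phi>)))))"
proof -
  note P = povmD[OF assms(2)]
  define gap where "gap A = lambda_max (msum n M A) - lambda_min (msum n M A)" for A
  have "Max (gap ` Pow Out) \<in> gap ` Pow Out" using P(1) by (intro Max_in) auto
  then obtain A where A: "A \<subseteq> Out" "gap A = Max (gap ` Pow Out)" by auto
  have opt: "gap B \<le> gap A" if "B \<subseteq> Out" for B
    using A(2) P(1) that by simp
  have "hermitian (msum n M A)" using A(1) P(2,3) by (intro msum_hermitian) auto
  moreover have "0 < n" using assms(1) by simp
  ultimately obtain \<psi> \<phi> where "\<psi> \<in> carrier_vec n" "\<psi> \<bullet>c \<psi> = 1"
      "eigenvector (msum n M A) \<psi> (of_real (lambda_max (msum n M A)))"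
      "\<phi> \<in> carrier_vec n" "\<phi> \<bullet>c \<phi> = 1"
      "eigenvector (msum n M A) \<phi> (of_real (lambda_min (msum n M A)))"
    using hermitian_extreme_unit_eigenvectors[OF msum_carrier] by metis
  then have "Kstar n Out M = gap A"
    using Kstar_eq_gap_at_eigenprojections(1)[OF assms(2) A(1)] opt unfolding gap_def by blast
  then have "Kstar n Out M = Max (gap ` Pow Out)" using A(2) by simp
  moreover have "2 * Kstar n Out M = (\<Sum>i\<in>Out. cmod (mtrace (M i * (proj \<psi> - proj \<phi>))))"
    if "Astar \<subseteq> Out" "\<forall>A. A \<subseteq> Out \<longrightarrow> gap A \<le> gap Astar"
      "\<psi> \<in> carrier_vec n" "\<phi> \<in> carrier_vec n" "\<psi> \<bullet>c \<psi> = 1" "\<phi> \<bullet>c \<phi> = 1"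
      "eigenvector (msum n M Astar) \<psi> (of_real (lambda_max (msum n M Astar)))"
      "eigenvector (msum n M Astar) \<phi> (of_real (lambda_min (msum n M Astar)))" for Astar \<psi> \<phi>
    using Kstar_eq_gap_at_eigenprojections(2)[OF assms(2) that(1) _ that(3,5,7,4,6,8)] that(2)
    unfolding gap_def by blast
  ultimately show ?thesis unfolding gap_def by blast
qed

end
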